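(* Let $q=4f+1$ be a prime, $\alpha$ a generator of $\mathbb Z_q^*$, and $D_k=\{\alpha^{4i+k}:i=0,1,\dots,f-1\}$ for $k=0,1,2,3$. Put $\mathfrak D_0=D_0\cup D_2$ and $\mathfrak D_1=D_1\cup D_3$, and let $\zeta_4\in\mathbb C$ be a primitive $4$th root of unity. Define the sequence $\underline a=(a_0,a_1,\dots,a_{q-1},\dots)$ of period $q$ by $a_i=\zeta_4^k$ if $i\in\mathfrak D_k$ ($k=0,1$) and $a_0=0$. Then $\underline a$ is an almost quaternary nearly perfect sequence of type $\frac{q-3}{2}$ with one zero-symbol, i.e. $C_{\underline a}(t)=\frac{q-3}{2}$ for all $1\le t\le q-1$.
   Context: $C_{\underline a}(t)=\sum_{i=0}^{q-1}a_i\overline{a_{i+t}}$, indices modulo $q$, bar denoting complex conjugation. *)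

theory Defs
  imports "HOL-Number_Theory.Number_Theory" Complex_Main
begin

definition autocorr :: "nat \<Rightarrow> (nat \<Rightarrow> complex) \<Rightarrow> nat \<Rightarrow> complex" where
  "autocorr q a t = (\<Sum>i<q. a i * cnj (a ((i + t) mod q)))"

definition cyc_class :: "nat \<Rightarrow> nat \<Rightarrow> nat \<Rightarrow> nat \<Rightarrow> nat set" where
  "cyc_class q \<alpha> f k = {(\<alpha> ^ (4 * i + k)) mod q | i. i < f}"

definition aq_seq :: "nat \<Rightarrow> nat \<Rightarrow> nat \<Rightarrow> complex \<Rightarrow> nat \<Rightarrow> complex" where
  "aq_seq q \<alpha> f \<zeta> i =
     (let j = i mod q in
      if j \<in> cyc_class q \<alpha> f 0 \<union> cyc_class q \<alpha> f 2 then 1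
      else if j \<in> cyc_class q \<alpha> f 1 \<union> cyc_class q \<alpha> f 3 then \<zeta>
      else 0)"

end

theory Submission
  imports Defs
begin

(* Write \<chi> for the quadratic character modulo q.  A primitive root \<alpha> is a quadratic
   non-residue, so D_0 \<union> D_2 and D_1 \<union> D_3 are exactly the residues and the non-residues, and
   away from 0 the sequence is a_i = A + B \<chi>(i) with A = (1 + \<zeta>)/2, B = (1 - \<zeta>)/2.
   Expanding the autocorrelation leaves the character sums \<Sum> \<chi>(i) = 0 and
   \<Sum> \<chi>(i) \<chi>(i + t) = -1, plus boundary terms from i = 0 and i = -t.  As \<chi>(-1) = 1 for
   q = 1 mod 4, the boundary terms combine to a multiple of \<chi>(t) with coefficient
   A cnj B + B cnj A, which vanishes since cnj \<zeta> = -\<zeta>.  What remains is (q - 2)/2 - 1/2. *)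

lemma bij_betw_affine_mod:
  fixes n b c :: nat
  assumes "coprime c n"
  shows "bij_betw (\<lambda>i. (b + c * i) mod n) {..<n} {..<n}"
proof (cases "n = 0")
  case False
  have inj: "inj_on (\<lambda>i. (b + c * i) mod n) {..<n}"
  proof (rule inj_onI)
    fix i j assume "i \<in> {..<n}" "j \<in> {..<n}" "(b + c * i) mod n = (b + c * j) mod n"
    then have "[c * i = c * j] (mod n)"
      by (simp add: cong_def cong_add_lcancel_nat flip: cong_def)
    then have "[i = j] (mod n)"
      using assms cong_mult_lcancel_nat by blast
    then show "i = j"
      using \<open>i \<in> {..<n}\<close> \<open>j \<in> {..<n}\<close> by (simp add: cong_def)
  qed
  moreover have "(\<lambda>i. (b + c * i) mod n) ` {..<n} \<subseteq> {..<n}"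
    using False by auto
  ultimately show ?thesis
    by (simp add: bij_betw_def endo_inj_surj)
qed (simp add: bij_betw_def)

lemma sum_affine_mod_reindex:
  fixes h :: "nat \<Rightarrow> 'a::comm_monoid_add"
  assumes "coprime c n" and "\<And>x. h (x mod n) = h x"
  shows "(\<Sum>i<n. h (b + c * i)) = (\<Sum>i<n. h i)"
  using sum.reindex_bij_betw[OF bij_betw_affine_mod[OF assms(1)], of h b] assms(2) by simp

lemma Legendre_cong:
  assumes "[a = b] (mod p)"
  shows "Legendre a p = Legendre b p"
proof -
  have "[a = 0] (mod p) \<longleftrightarrow> [b = 0] (mod p)"
    using assms cong_sym cong_trans by blast
  moreover have "QuadRes p a \<longleftrightarrow> QuadRes p b"
    unfolding QuadRes_def using assms cong_sym cong_trans by blast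
  ultimately show ?thesis
    by (simp add: Legendre_def)
qed

lemma Legendre_of_nat_mod: "Legendre (int (x mod p)) (int p) = Legendre (int x) (int p)"
  by (rule Legendre_cong, unfold cong_int_iff) (simp add: cong_def)

lemma Legendre_values: "Legendre a p \<in> {-1, 0, 1}"
  by (simp add: Legendre_def)

lemma Legendre_0 [simp]: "Legendre 0 p = 0"
  by (simp add: Legendre_def)

lemma Legendre_eq_0_iff: "Legendre a p = 0 \<longleftrightarrow> [a = 0] (mod p)"
  by (simp add: Legendre_def)

lemma Legendre_square: "\<not> [a = 0] (mod p) \<Longrightarrow> Legendre a p * Legendre a p = 1"
  by (simp add: Legendre_def)

lemma sign_eq_if_cong:
  fixes x y :: int and p :: nat
  assumes "x \<in> {-1, 0, 1}" "y \<in> {-1, 0, 1}" "2 < p" "[x = y] (mod p)"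
  shows "x = y"
proof -
  have "int p dvd x - y"
    using assms(4) by (simp add: cong_iff_dvd_diff)
  moreover have "\<bar>x - y\<bar> < int p"
    using assms(1-3) by auto
  ultimately show ?thesis
    using dvd_imp_le_int[of "x - y" "int p"] by linarith
qed

lemma Legendre_mult:
  assumes "prime p" "2 < p"
  shows "Legendre (a * b) (int p) = Legendre a (int p) * Legendre b (int p)"
proof (rule sign_eq_if_cong[OF Legendre_values _ \<open>2 < p\<close>])
  show "Legendre a (int p) * Legendre b (int p) \<in> {-1, 0, 1}"
    using Legendre_values[of a "int p"] Legendre_values[of b "int p"] by auto
  have "[Legendre (a * b) (int p) = (a * b) ^ ((p - 1) div 2)] (mod p)"
    using euler_criterion assms by blast
  also have "(a * b) ^ ((p - 1) div 2) = a ^ ((p - 1) div 2) * b ^ ((p - 1) div 2)"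
    by (simp add: power_mult_distrib)
  also have "[\<dots> = Legendre a (int p) * Legendre b (int p)] (mod p)"
    using euler_criterion[OF assms] by (intro cong_mult) (simp_all add: cong_sym)
  finally show "[Legendre (a * b) (int p) = Legendre a (int p) * Legendre b (int p)] (mod p)" .
qed

lemma prime_gt_2_if_cong_1_mod_4:
  fixes p :: nat
  assumes "prime p" "[p = 1] (mod 4)"
  shows "2 < p"
  using prime_gt_1_nat[OF assms(1)] assms(2) unfolding cong_def by presburger

lemma Legendre_minus_one:
  assumes "prime p" "[p = 1] (mod 4)"
  shows "Legendre (-1) (int p) = 1"
proof -
  have "2 < p"
    using prime_gt_2_if_cong_1_mod_4[OF assms] .
  moreover have "even ((p - 1) div 2)"
    using assms(2) unfolding cong_def by presburger
  ultimately have "[Legendre (-1) (int p) = 1] (mod p)"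
    using euler_criterion[OF assms(1), of "-1"] by simp
  then show ?thesis
    using sign_eq_if_cong[OF Legendre_values _ \<open>2 < p\<close>] by simp
qed

lemma Legendre_modulus_diff:
  assumes "prime p" "[p = 1] (mod 4)" "t \<le> p"
  shows "Legendre (int (p - t)) (int p) = Legendre (int t) (int p)"
proof -
  have "Legendre (int (p - t)) (int p) = Legendre (-1 * int t) (int p)"
    using assms(3) by (intro Legendre_cong) (simp add: of_nat_diff cong_iff_dvd_diff)
  also have "\<dots> = Legendre (int t) (int p)"
    by (simp only: Legendre_mult[OF assms(1) prime_gt_2_if_cong_1_mod_4[OF assms(1,2)]]
        Legendre_minus_one[OF assms(1,2)] mult_1)
  finally show ?thesis .
qed

lemma Legendre_primroot:
  assumes "prime p" "2 < p" "residue_primroot p g"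
  shows "Legendre (int g) (int p) = -1"
proof -
  have ord: "ord p g = p - 1" and cop: "coprime p g"
    using assms by (simp_all add: residue_primroot_def totient_prime)
  have "0 < (p - 1) div 2" "(p - 1) div 2 < p - 1"
    using assms(2) by auto
  then have not_one: "\<not> [g ^ ((p - 1) div 2) = 1] (mod p)"
    using ord_minimal[of "(p - 1) div 2" p g] ord by simp
  have euler: "[Legendre (int g) (int p) = int g ^ ((p - 1) div 2)] (mod int p)"
    using euler_criterion[OF assms(1,2)] by blast
  have "Legendre (int g) (int p) \<noteq> 1"
  proof
    assume "Legendre (int g) (int p) = 1"
    then have "[int (g ^ ((p - 1) div 2)) = int 1] (mod int p)"
      using euler by (simp add: cong_sym)
    then have "[g ^ ((p - 1) div 2) = 1] (mod p)"
      by (simp only: cong_int_iff)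
    with not_one show False
      by contradiction
  qed
  moreover have "\<not> p dvd g"
  proof
    assume "p dvd g"
    with cop have "is_unit p"
      by (simp add: coprime_absorb_left)
    with assms(1) show False
      by simp
  qed
  then have "\<not> [int g = 0] (mod int p)"
    by (simp add: cong_0_iff)
  ultimately show ?thesis
    using Legendre_values[of "int g" "int p"] by (auto simp: Legendre_eq_0_iff)
qed

lemma Legendre_primroot_power:
  assumes "prime p" "2 < p" "residue_primroot p g"
  shows "Legendre (int g ^ m) (int p) = (-1) ^ m"
proof (induction m)
  case 0
  have "\<not> [1 = 0] (mod int p)"
    using assms(2) by (simp add: cong_def)
  moreover have "QuadRes (int p) 1"
    unfolding QuadRes_def by (rule exI[of _ 1]) simp
  ultimately show ?case
    by (simp add: Legendre_def)
next
  case (Suc m)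
  then show ?case
    using Legendre_mult[OF assms(1,2)] Legendre_primroot[OF assms] by simp
qed

lemma sum_alternating_signs: "(\<Sum>m<2 * k. (-1::int) ^ m) = 0"
  by (induction k) (simp_all add: mult_2 numeral_2_eq_2)

lemma sum_Legendre:
  assumes "prime p" "2 < p"
  shows "(\<Sum>i<p. Legendre (int i) (int p)) = 0"
proof -
  obtain g where g: "residue_primroot p g"
    using prime_primitive_root_exists assms(1) prime_gt_1_nat by blast
  have "even (p - 1)"
    using assms prime_odd_nat by simp
  then obtain k where k: "p - 1 = 2 * k"
    by (rule evenE)
  have "{..<p} = insert 0 {0<..<p}"
    using assms(2) by auto
  then have "(\<Sum>i<p. Legendre (int i) (int p)) = (\<Sum>i\<in>{0<..<p}. Legendre (int i) (int p))"
    by simp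
  also have "\<dots> = (\<Sum>m<totient p. Legendre (int (g ^ m mod p)) (int p))"
    using sum.reindex_bij_betw[OF residue_primroot_is_generator[OF prime_gt_1_nat[OF assms(1)] g],
        of "\<lambda>i. Legendre (int i) (int p)", symmetric] assms(1)
    by (simp add: totatives_prime)
  also have "\<dots> = (\<Sum>m<2 * k. (-1) ^ m)"
    using Legendre_primroot_power[OF assms g] k assms(1)
    by (simp add: Legendre_of_nat_mod totient_prime)
  also have "\<dots> = 0"
    by (rule sum_alternating_signs)
  finally show ?thesis .
qed

lemma sum_Legendre_shift:
  assumes "prime p" "2 < p"
  shows "(\<Sum>i<p. Legendre (int (b + i)) (int p)) = 0"
  using sum_affine_mod_reindex[of 1 p "\<lambda>i. Legendre (int i) (int p)", OF _ Legendre_of_nat_mod]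
    sum_Legendre[OF assms] by simp

lemma sum_Legendre_mult_shift_scale:
  assumes "prime p" "2 < p" "\<not> p dvd s"
  shows "(\<Sum>i<p. Legendre (int i) (int p) * Legendre (int (i + s)) (int p))
       = (\<Sum>i<p. Legendre (int i) (int p) * Legendre (int (i + 1)) (int p))"
proof -
  define \<chi> where "\<chi> i = Legendre (int i) (int p)" for i
  have \<chi>_mod: "\<chi> (x mod p) = \<chi> x" for x
    unfolding \<chi>_def by (rule Legendre_of_nat_mod)
  have \<chi>_mod_add: "\<chi> (x mod p + y) = \<chi> (x + y)" for x y
    unfolding \<chi>_def by (rule Legendre_cong, unfold cong_int_iff) (simp add: cong_def mod_add_left_eq)
  have \<chi>_mult: "\<chi> (x * y) = \<chi> x * \<chi> y" for x y
    using Legendre_mult[OF assms(1,2)] by (simp add: \<chi>_def)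
  have "coprime s p"
    using assms(1,3) by (simp add: prime_imp_coprime coprime_commute)
  have "(\<Sum>i<p. \<chi> i * \<chi> (i + s)) = (\<Sum>k<p. \<chi> (0 + s * k) * \<chi> (0 + s * k + s))"
    by (rule sum_affine_mod_reindex[OF \<open>coprime s p\<close>, symmetric]) (simp add: \<chi>_mod \<chi>_mod_add)
  also have "\<dots> = (\<Sum>k<p. (\<chi> s * \<chi> s) * (\<chi> k * \<chi> (k + 1)))"
  proof (rule sum.cong[OF refl])
    fix k
    have "\<chi> (0 + s * k + s) = \<chi> s * \<chi> (k + 1)"
      using \<chi>_mult[of s "k + 1"] by (simp add: distrib_left add.commute)
    then show "\<chi> (0 + s * k) * \<chi> (0 + s * k + s) = (\<chi> s * \<chi> s) * (\<chi> k * \<chi> (k + 1))"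
      by (simp add: \<chi>_mult mult_ac)
  qed
  also have "\<chi> s * \<chi> s = 1"
    using assms(3) by (simp add: \<chi>_def Legendre_square cong_0_iff)
  finally show ?thesis
    by (simp add: \<chi>_def)
qed

lemma sum_sum_Legendre_mult_shift:
  assumes "prime p" "2 < p"
  shows "(\<Sum>s<p. \<Sum>i<p. Legendre (int i) (int p) * Legendre (int (i + s)) (int p)) = 0"
proof -
  have "(\<Sum>s<p. \<Sum>i<p. Legendre (int i) (int p) * Legendre (int (i + s)) (int p))
      = (\<Sum>i<p. Legendre (int i) (int p) * (\<Sum>s<p. Legendre (int (i + s)) (int p)))"
    by (subst sum.swap) (simp add: sum_distrib_left)
  also have "\<dots> = 0"
    using sum_Legendre_shift[OF assms] by simp
  finally show ?thesis .
qed

(* Write S(s) for the sum with shift s.  Then S(s) = S(1) whenever s \<noteq> 0 mod p, S(0) = p - 1,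
   and \<Sum>\<^sub>s S(s) = (\<Sum> \<chi>)^2 = 0; hence (p - 1) (1 + S(1)) = 0. *)
lemma sum_Legendre_mult_shift:
  assumes "prime p" "2 < p" "\<not> p dvd t"
  shows "(\<Sum>i<p. Legendre (int i) (int p) * Legendre (int (i + t)) (int p)) = -1"
proof -
  define S where "S s = (\<Sum>i<p. Legendre (int i) (int p) * Legendre (int (i + s)) (int p))" for s
  have lessThan_split: "{..<p} = insert 0 {0<..<p}"
    using assms(2) by auto
  have not_dvd: "\<not> p dvd s" if "s \<in> {0<..<p}" for s
    using that by (auto dest: dvd_imp_le)
  have "S 0 = (\<Sum>i\<in>{0<..<p}. Legendre (int i) (int p) * Legendre (int i) (int p))"
    unfolding S_def lessThan_split by simp
  also have "\<dots> = (\<Sum>i\<in>{0<..<p}. 1)"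
    using not_dvd by (intro sum.cong) (simp_all add: Legendre_square cong_0_iff)
  finally have S_0: "S 0 = int (p - 1)"
    by simp
  have "0 = (\<Sum>s<p. S s)"
    using sum_sum_Legendre_mult_shift[OF assms(1,2)] by (simp add: S_def)
  also have "\<dots> = S 0 + (\<Sum>s\<in>{0<..<p}. S s)"
    unfolding lessThan_split by simp
  also have "(\<Sum>s\<in>{0<..<p}. S s) = (\<Sum>s\<in>{0<..<p}. S 1)"
    unfolding S_def by (intro sum.cong refl sum_Legendre_mult_shift_scale[OF assms(1,2) not_dvd])
  also have "S 0 + (\<Sum>s\<in>{0<..<p}. S 1) = int (p - 1) * (1 + S 1)"
    by (simp add: S_0 algebra_simps)
  finally have "S 1 = -1"
    using assms(2) by simp
  then show ?thesis
    using sum_Legendre_mult_shift_scale[OF assms] by (simp add: S_def)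
qed

lemma autocorr_linear_combination:
  fixes A B :: complex and e \<chi> :: "nat \<Rightarrow> complex"
  assumes "\<And>i. a i = A * e i + B * \<chi> i" and "\<And>i. cnj (e i) = e i" and "\<And>i. cnj (\<chi> i) = \<chi> i"
  shows "autocorr p a t
      = A * cnj A * (\<Sum>i<p. e i * e ((i + t) mod p)) + A * cnj B * (\<Sum>i<p. e i * \<chi> ((i + t) mod p))
      + B * cnj A * (\<Sum>i<p. \<chi> i * e ((i + t) mod p)) + B * cnj B * (\<Sum>i<p. \<chi> i * \<chi> ((i + t) mod p))"
  unfolding autocorr_def assms(1)
  by (simp add: assms(2,3) algebra_simps sum.distrib sum_distrib_left)

lemma dvd_add_iff_eq_diff:
  fixes p i t :: nat
  assumes "i < p" "0 < t" "t < p"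
  shows "p dvd i + t \<longleftrightarrow> i = p - t"
proof -
  have "(i + t) mod p = (if i + t < p then i + t else i + t - p)"
    using assms by (auto simp: le_mod_geq)
  then show ?thesis
    using assms by (auto simp: dvd_eq_mod_eq_0)
qed

lemma autocorr_Legendre_combination:
  fixes A B :: complex and a :: "nat \<Rightarrow> complex"
  assumes p: "prime p" "[p = 1] (mod 4)" and t: "0 < t" "t < p"
    and a: "\<And>i. a i = (if p dvd i then 0 else A + B * of_int (Legendre (int i) (int p)))"
  shows "autocorr p a t = of_nat (p - 2) * (A * cnj A)
           - (A * cnj B + B * cnj A) * of_int (Legendre (int t) (int p)) - B * cnj B"
proof -
  have "2 < p"
    using prime_gt_2_if_cong_1_mod_4[OF p] .
  define \<chi> where "\<chi> i = (of_int (Legendre (int i) (int p)) :: complex)" for i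
  define e where "e i = (if p dvd i then 0 else 1 :: complex)" for i
  have e_0: "e i = (if i = 0 then 0 else 1)" and e_t: "e (i + t) = (if i = p - t then 0 else 1)"
    if "i < p" for i
    using that t dvd_add_iff_eq_diff[OF that t] by (auto simp: e_def dest: dvd_imp_le)
  have \<chi>_neg: "\<chi> (p - t) = \<chi> t"
    using Legendre_modulus_diff[OF p] t by (simp add: \<chi>_def)
  have sum_\<chi>: "(\<Sum>i<p. \<chi> (b + i)) = 0" for b
    using sum_Legendre_shift[OF p(1) \<open>2 < p\<close>, of b] by (simp add: \<chi>_def flip: of_int_sum)
  have "(\<Sum>i<p. e i * e (i + t)) = (\<Sum>i<p. 1 - (if i = 0 then 1 else 0) - (if i = p - t then 1 else 0))"
    using t by (intro sum.cong) (auto simp: e_0 e_t)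
  then have sum_ee: "(\<Sum>i<p. e i * e (i + t)) = of_nat (p - 2)"
    using t \<open>2 < p\<close> by (simp add: sum_subtractf)
  have "(\<Sum>i<p. e i * \<chi> (i + t)) = (\<Sum>i<p. \<chi> (t + i) - (if i = 0 then \<chi> (t + i) else 0))"
    by (intro sum.cong) (auto simp: e_0 add.commute)
  then have sum_e\<chi>: "(\<Sum>i<p. e i * \<chi> (i + t)) = - \<chi> t"
    using t sum_\<chi>[of t] by (simp add: sum_subtractf)
  have "(\<Sum>i<p. \<chi> i * e (i + t)) = (\<Sum>i<p. \<chi> (0 + i) - (if i = p - t then \<chi> i else 0))"
    by (intro sum.cong) (auto simp: e_t)
  then have sum_\<chi>e: "(\<Sum>i<p. \<chi> i * e (i + t)) = - \<chi> t"
    using t sum_\<chi>[of 0] \<chi>_neg by (simp add: sum_subtractf)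
  have "\<not> p dvd t"
    using t by (auto dest: dvd_imp_le)
  then have sum_\<chi>\<chi>: "(\<Sum>i<p. \<chi> i * \<chi> (i + t)) = -1"
    using sum_Legendre_mult_shift[OF p(1) \<open>2 < p\<close>] by (simp add: \<chi>_def flip: of_int_sum of_int_mult)
  have "autocorr p a t = A * cnj A * (\<Sum>i<p. e i * e (i + t)) + A * cnj B * (\<Sum>i<p. e i * \<chi> (i + t))
      + B * cnj A * (\<Sum>i<p. \<chi> i * e (i + t)) + B * cnj B * (\<Sum>i<p. \<chi> i * \<chi> (i + t))"
    using autocorr_linear_combination[of a A e B \<chi> p t]
    by (simp add: a e_def \<chi>_def dvd_mod_iff Legendre_of_nat_mod Legendre_eq_0_iff cong_0_iff)
  also have "\<dots> = A * cnj A * of_nat (p - 2) + A * cnj B * (- \<chi> t)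
        + B * cnj A * (- \<chi> t) + B * cnj B * (- 1)"
    by (simp only: sum_ee sum_e\<chi> sum_\<chi>e sum_\<chi>\<chi>)
  finally show ?thesis
    by (simp add: \<chi>_def algebra_simps)
qed

lemma Legendre_cyc_class:
  assumes "prime q" "2 < q" "residue_primroot q \<alpha>" "x \<in> cyc_class q \<alpha> f k"
  shows "Legendre (int x) (int q) = (-1) ^ k"
proof -
  obtain i where "x = \<alpha> ^ (4 * i + k) mod q"
    using assms(4) by (auto simp: cyc_class_def)
  then show ?thesis
    using Legendre_primroot_power[OF assms(1-3), of "4 * i + k"]
    by (simp add: Legendre_of_nat_mod power_add power_mult)
qed

lemma cyc_class_cover:
  assumes "prime q" "q = 4 * f + 1" "residue_primroot q \<alpha>" "0 < j" "j < q"
  obtains k where "k < 4" "j \<in> cyc_class q \<alpha> f k"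
proof -
  have "j \<in> (\<lambda>m. \<alpha> ^ m mod q) ` {..<totient q}"
    using residue_primroot_is_generator[OF prime_gt_1_nat[OF assms(1)] assms(3)] assms(1,4,5)
    by (auto simp: bij_betw_def totatives_prime)
  then obtain m where m: "m < 4 * f" "j = \<alpha> ^ m mod q"
    using assms(1,2) by (auto simp: totient_prime)
  then have "j \<in> cyc_class q \<alpha> f (m mod 4)"
    unfolding cyc_class_def by (intro CollectI exI[of _ "m div 4"]) auto
  then show thesis
    by (intro that[of "m mod 4"]) simp_all
qed

lemma cyc_class_Legendre_iff:
  assumes "prime q" "q = 4 * f + 1" "residue_primroot q \<alpha>" "0 < j" "j < q"
  shows "j \<in> cyc_class q \<alpha> f 0 \<union> cyc_class q \<alpha> f 2 \<longleftrightarrow> Legendre (int j) (int q) = 1"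
    and "j \<in> cyc_class q \<alpha> f 1 \<union> cyc_class q \<alpha> f 3 \<longleftrightarrow> Legendre (int j) (int q) = -1"
proof -
  have "2 < q"
    using prime_gt_1_nat[OF assms(1)] assms(2) by simp
  note class_Legendre = Legendre_cyc_class[OF assms(1) \<open>2 < q\<close> assms(3), of j f]
  obtain k where k: "k < 4" "j \<in> cyc_class q \<alpha> f k"
    using cyc_class_cover[OF assms] by blast
  then have "k = 0 \<or> k = 1 \<or> k = 2 \<or> k = 3"
    by arith
  then show "j \<in> cyc_class q \<alpha> f 0 \<union> cyc_class q \<alpha> f 2 \<longleftrightarrow> Legendre (int j) (int q) = 1"
    and "j \<in> cyc_class q \<alpha> f 1 \<union> cyc_class q \<alpha> f 3 \<longleftrightarrow> Legendre (int j) (int q) = -1"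
    using k(2) class_Legendre[of 0] class_Legendre[of 1] class_Legendre[of 2] class_Legendre[of 3]
    by auto
qed

lemma aq_seq_eq_Legendre:
  assumes "prime q" "q = 4 * f + 1" "residue_primroot q \<alpha>"
  shows "aq_seq q \<alpha> f \<zeta> i
    = (if q dvd i then 0 else (1 + \<zeta>) / 2 + (1 - \<zeta>) / 2 * of_int (Legendre (int i) (int q)))"
proof (cases "q dvd i")
  case True
  have "2 < q"
    using prime_gt_1_nat[OF assms(1)] assms(2) by simp
  then have "0 \<notin> cyc_class q \<alpha> f k" for k
    using Legendre_cyc_class[OF assms(1) \<open>2 < q\<close> assms(3), of 0 f k] by auto
  then show ?thesis
    using True by (simp add: aq_seq_def)
next
  case False
  then have "0 < i mod q" "i mod q < q"
    using prime_gt_1_nat[OF assms(1)] by (auto simp: dvd_eq_mod_eq_0)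
  note class_iff = cyc_class_Legendre_iff[OF assms this, unfolded Legendre_of_nat_mod]
  have "Legendre (int i) (int q) = 1 \<or> Legendre (int i) (int q) = -1"
    using False Legendre_values[of "int i" "int q"] by (auto simp: Legendre_eq_0_iff cong_0_iff)
  then show ?thesis
    using False class_iff by (auto simp: aq_seq_def field_simps)
qed

lemma primitive_fourth_root_of_unity:
  fixes \<zeta> :: complex
  assumes "\<zeta> ^ 4 = 1" and "\<zeta> ^ 2 \<noteq> 1"
  shows "\<zeta> ^ 2 = -1" and "cnj \<zeta> = - \<zeta>"
proof -
  have "(\<zeta> ^ 2) ^ 2 = 1"
    using assms(1) by (simp flip: power_mult)
  with assms(2) show \<zeta>_square: "\<zeta> ^ 2 = -1"
    using power2_eq_1_iff by blast
  then have "\<zeta> = \<i> \<or> \<zeta> = - \<i>"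
    using power2_eq_iff[of \<zeta> \<i>] by simp
  then show "cnj \<zeta> = - \<zeta>"
    by auto
qed

theorem theorem4:
  fixes q f \<alpha> :: nat and \<zeta> :: complex
  assumes "prime q" and "q = 4 * f + 1"
    and "residue_primroot q \<alpha>"
    and "\<zeta> ^ 4 = 1" and "\<zeta> ^ 2 \<noteq> 1"
  shows "\<forall>t. 1 \<le> t \<and> t \<le> q - 1 \<longrightarrow>
           autocorr q (aq_seq q \<alpha> f \<zeta>) t = (of_nat q - 3) / 2"
proof (intro allI impI)
  fix t
  assume "1 \<le> t \<and> t \<le> q - 1"
  then have t: "0 < t" "t < q"
    using prime_gt_1_nat[OF assms(1)] by auto
  have q_mod_4: "[q = 1] (mod 4)"
    using assms(2) by (simp add: cong_def)
  have "autocorr q (aq_seq q \<alpha> f \<zeta>) t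
      = of_nat (q - 2) * ((1 + \<zeta>) / 2 * cnj ((1 + \<zeta>) / 2))
        - ((1 + \<zeta>) / 2 * cnj ((1 - \<zeta>) / 2) + (1 - \<zeta>) / 2 * cnj ((1 + \<zeta>) / 2))
          * of_int (Legendre (int t) (int q))
        - (1 - \<zeta>) / 2 * cnj ((1 - \<zeta>) / 2)"
    by (rule autocorr_Legendre_combination[OF assms(1) q_mod_4 t aq_seq_eq_Legendre[OF assms(1-3)]])
  also have "\<dots> = of_nat (q - 2) / 2 - 1 / 2"
    using primitive_fourth_root_of_unity[OF assms(4,5)] by (simp add: field_simps power2_eq_square)
  also have "\<dots> = (of_nat q - 3) / 2"
    using t by (simp add: of_nat_diff field_simps)
  finally show "autocorr q (aq_seq q \<alpha> f \<zeta>) t = (of_nat q - 3) / 2" .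
qed

end
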